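(* Let $S$ be an infinite set, $\mathcal{F}\subseteq 2^S$ nontrivial, and $C,A\subseteq S$ with $A$ infinite and $A\cap C=\emptyset$. Then the following are equivalent: (i) $A\in\mathit{ccore}_1(C,\mathcal{F})$; (ii) $A\notin\mathit{cclass}_1(C,\mathcal{F})$ and $A\in\mathit{ccohesive}(S\setminus C,\mathcal{F})$.
   Context: $\mathcal{F}$ is nontrivial if $\emptyset,S\in\mathcal{F}$ and for all $Q\in\mathcal{F}$ and finite $E\subseteq S$ both $Q\cup E\in\mathcal{F}$ and $Q\setminus E\in\mathcal{F}$. For $C\subseteq S$ and an infinite $A\subseteq S\setminus C$: $A\in\mathit{cclass}_1(C,\mathcal{F})$ iff there is $Q\in\mathcal{F}$ with $S\setminus Q\in\mathcal{F}$, $C\subseteq Q$ and $A\subseteq S\setminus Q$; $A\in\mathit{ccore}_1(C,\mathcal{F})$ iff every infinite $A'\subseteq A$ satisfies $A'\notin\mathit{cclass}_1(C,\mathcal{F})$. For $D\subseteq S$, $A\in\mathit{ccohesive}(D,\mathcal{F})$ iff $A$ is infinite and for every $Q\subseteq D$ with $Q\in\mathcal{F}$ and $S\setminus Q\in\mathcal{F}$, either $A\cap Q$ or $A\setminus Q$ is finite. *)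

theory Defs
  imports Main
begin

definition nontrivial :: "'a set \<Rightarrow> 'a set set \<Rightarrow> bool" where
  "nontrivial S F \<longleftrightarrow> F \<subseteq> Pow S \<and> {} \<in> F \<and> S \<in> F \<and>
     (\<forall>Q\<in>F. \<forall>E. finite E \<and> E \<subseteq> S \<longrightarrow> Q \<union> E \<in> F \<and> Q - E \<in> F)"

definition cclass1 :: "'a set \<Rightarrow> 'a set \<Rightarrow> 'a set set \<Rightarrow> 'a set set" where
  "cclass1 S C F = {A. infinite A \<and> A \<subseteq> S - C \<and>
     (\<exists>Q\<in>F. S - Q \<in> F \<and> C \<subseteq> Q \<and> A \<subseteq> S - Q)}"

definition ccore1 :: "'a set \<Rightarrow> 'a set \<Rightarrow> 'a set set \<Rightarrow> 'a set set" where
  "ccore1 S C F = {A. infinite A \<and> A \<subseteq> S - C \<and>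
     (\<forall>A'. A' \<subseteq> A \<and> infinite A' \<longrightarrow> A' \<notin> cclass1 S C F)}"

definition ccohesive :: "'a set \<Rightarrow> 'a set \<Rightarrow> 'a set set \<Rightarrow> 'a set set" where
  "ccohesive S D F = {A. infinite A \<and>
     (\<forall>Q. Q \<subseteq> D \<and> Q \<in> F \<and> S - Q \<in> F \<longrightarrow> finite (A \<inter> Q) \<or> finite (A - Q))}"

end

theory Submission
  imports Defs
begin

text \<open>An infinite piece of A inside a splitting set Q \<subseteq> S - C is separated by S - Q, so a core set
  is cohesive. Conversely, if some infinite A' \<subseteq> A is separated from C by Q, cohesiveness
  applied to S - Q forces A \<inter> Q to be finite; removing this finite set from Q separates all of A,
  and nontriviality keeps the modified set and its complement in F.\<close>

lemma cclass1_if_subset_split: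
  assumes "C \<subseteq> S" and "Q \<subseteq> S - C" and "Q \<in> F" and "S - Q \<in> F"
    and "infinite A" and "A \<subseteq> Q"
  shows "A \<in> cclass1 S C F"
proof -
  have "S - (S - Q) = Q" using assms(2) by blast
  then show ?thesis
    unfolding cclass1_def using assms by (intro CollectI conjI bexI[of _ "S - Q"]) auto
qed

lemma cclass1_if_finite_inter:
  assumes "nontrivial S F" and "Q \<in> F" and "S - Q \<in> F" and "C \<subseteq> Q"
    and "infinite A" and "A \<subseteq> S - C" and "finite (A \<inter> Q)"
  shows "A \<in> cclass1 S C F"
proof -
  have F_closed: "F \<subseteq> Pow S"
    "\<And>P E. P \<in> F \<Longrightarrow> finite E \<Longrightarrow> E \<subseteq> S \<Longrightarrow> P \<union> E \<in> F \<and> P - E \<in> F"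
    using assms(1) unfolding nontrivial_def by blast+
  have "Q \<subseteq> S" using assms(2) F_closed(1) by blast
  let ?Q' = "Q - A \<inter> Q"
  have "?Q' \<in> F" using F_closed(2)[OF assms(2,7)] assms(6) by blast
  moreover have "S - ?Q' = (S - Q) \<union> (A \<inter> Q)" using \<open>Q \<subseteq> S\<close> by blast
  then have "S - ?Q' \<in> F" using F_closed(2)[OF assms(3,7)] assms(6) by auto
  ultimately show ?thesis
    unfolding cclass1_def using assms(4-6) by (intro CollectI conjI bexI[of _ ?Q']) auto
qed

theorem lemma4p3:
  fixes S C A :: "'a set" and F :: "'a set set"
  assumes "infinite S" and "nontrivial S F"
    and "C \<subseteq> S" and "A \<subseteq> S" and "infinite A" and "A \<inter> C = {}"
  shows "A \<in> ccore1 S C F \<longleftrightarrow> (A \<notin> cclass1 S C F \<and> A \<in> ccohesive S (S - C) F)"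
proof
  assume "A \<in> ccore1 S C F"
  then have no_sub: "\<And>A'. A' \<subseteq> A \<Longrightarrow> infinite A' \<Longrightarrow> A' \<notin> cclass1 S C F"
    unfolding ccore1_def by blast
  have "A \<in> ccohesive S (S - C) F"
    unfolding ccohesive_def
  proof (intro CollectI conjI allI impI assms(5))
    fix Q assume "Q \<subseteq> S - C \<and> Q \<in> F \<and> S - Q \<in> F"
    then have "A \<inter> Q \<notin> cclass1 S C F \<Longrightarrow> finite (A \<inter> Q)"
      using cclass1_if_subset_split[OF assms(3)] by blast
    with no_sub show "finite (A \<inter> Q) \<or> finite (A - Q)" by blast
  qed
  with no_sub assms(5) show "A \<notin> cclass1 S C F \<and> A \<in> ccohesive S (S - C) F" by blast
next
  assume "A \<notin> cclass1 S C F \<and> A \<in> ccohesive S (S - C) F"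
  then have not_cclass: "A \<notin> cclass1 S C F"
    and cohesive: "\<And>Q. Q \<subseteq> S - C \<Longrightarrow> Q \<in> F \<Longrightarrow> S - Q \<in> F \<Longrightarrow> finite (A \<inter> Q) \<or> finite (A - Q)"
    unfolding ccohesive_def by blast+
  have "A' \<notin> cclass1 S C F" if "A' \<subseteq> A" and "infinite A'" for A'
  proof
    assume "A' \<in> cclass1 S C F"
    then obtain Q where Q: "Q \<in> F" "S - Q \<in> F" "C \<subseteq> Q" "A' \<subseteq> S - Q"
      unfolding cclass1_def by blast
    have "Q \<subseteq> S" using Q(1) assms(2) unfolding nontrivial_def by blast
    then have "finite (A \<inter> (S - Q)) \<or> finite (A - (S - Q))"
      using cohesive[of "S - Q"] Q by (auto simp: double_diff)
    moreover have "infinite (A \<inter> (S - Q))"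
      using that Q(4) by (meson Int_greatest finite_subset)
    moreover have "A - (S - Q) = A \<inter> Q" using assms(4) by blast
    ultimately have "A \<in> cclass1 S C F"
      using cclass1_if_finite_inter[OF assms(2) Q(1-3) assms(5)] assms(4,6) by auto
    with not_cclass show False ..
  qed
  then show "A \<in> ccore1 S C F" unfolding ccore1_def using assms(4-6) by blast
qed

end
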